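(* Let $\mathscr Q_n$ be a non-singular quadric in $\mathrm{PG}(n,q)$ of projective index $g$ with point-graph $\Gamma$, let $0\le s<g$, and let $\alpha_s$ be an $s$-dimensional subspace contained in $\mathscr Q_n$. Then every vertex of $\mathcal Y_s$ is adjacent in $\Gamma$ to $0$, $\frac12|\mathcal X_s|$ or $|\mathcal X_s|$ vertices of $\mathcal X_s$ if and only if $q=2$.
   Context: A non-singular quadric $\mathscr Q_n$ in $\mathrm{PG}(n,q)$ is the point set of a non-degenerate quadric; its projective index $g$ is the largest dimension of a projective subspace contained in $\mathscr Q_n$. The point-graph $\Gamma$ has vertex set the points of $\mathscr Q_n$, two distinct points adjacent iff the line joining them is contained in $\mathscr Q_n$. A point $X$ of $\mathscr Q_n$ has type (i) if $X\in\alpha_s$; type (ii) if $X\notin\alpha_s$ and the $(s+1)$-space $\langle\alpha_s,X\rangle$ is contained in $\mathscr Q_n$; type (iii) otherwise. $\mathcal X_s$ is the set of type (ii) points and $\mathcal Y_s$ the set of points of type (i) or (iii). *)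

theory Defs
  imports "HOL-Analysis.Analysis"
begin

text \<open>PG(n,q) is modelled on the vector space 'a^'n over a finite field 'a,
  where q = CARD('a) and n + 1 = CARD('n).  A projective subspace of
  (projective) dimension k is a linear subspace of vector dimension k + 1;
  projective points are linear subspaces of dimension 1.\<close>

definition is_quadratic_form :: "('a::field ^'n \<Rightarrow> 'a) \<Rightarrow> bool" where
  "is_quadratic_form Q \<longleftrightarrow>
     (\<exists>c :: 'n \<Rightarrow> 'n \<Rightarrow> 'a. \<forall>x. Q x = (\<Sum>i\<in>UNIV. \<Sum>j\<in>UNIV. c i j * x$i * x$j))"

definition polar_form :: "('a::field ^'n \<Rightarrow> 'a) \<Rightarrow> 'a^'n \<Rightarrow> 'a^'n \<Rightarrow> 'a" where
  "polar_form Q x y = Q (x + y) - Q x - Q y"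

definition nonsingular_qf :: "('a::field ^'n \<Rightarrow> 'a) \<Rightarrow> bool" where
  "nonsingular_qf Q \<longleftrightarrow> is_quadratic_form Q \<and>
     (\<forall>x. (\<forall>y. polar_form Q x y = 0) \<and> Q x = 0 \<longrightarrow> x = 0)"

definition proj_subspace :: "nat \<Rightarrow> ('a::field ^'n) set \<Rightarrow> bool" where
  "proj_subspace k W \<longleftrightarrow> vec.subspace W \<and> vec.dim W = k + 1"

definition proj_points :: "('a::field ^'n) set set" where
  "proj_points = {P. proj_subspace 0 P}"

definition on_quadric :: "('a::field ^'n \<Rightarrow> 'a) \<Rightarrow> ('a ^'n) set \<Rightarrow> bool" where
  "on_quadric Q W \<longleftrightarrow> (\<forall>x\<in>W. Q x = 0)"

definition quadric_points :: "('a::field ^'n \<Rightarrow> 'a) \<Rightarrow> ('a ^'n) set set" where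
  "quadric_points Q = {P \<in> proj_points. on_quadric Q P}"

definition proj_index :: "('a::field ^'n \<Rightarrow> 'a) \<Rightarrow> int" where
  "proj_index Q = (GREATEST k::int. \<exists>W :: ('a^'n) set.
      vec.subspace W \<and> int (vec.dim W) = k + 1 \<and> on_quadric Q W)"

definition qadj :: "('a::field ^'n \<Rightarrow> 'a) \<Rightarrow> ('a ^'n) set \<Rightarrow> ('a ^'n) set \<Rightarrow> bool" where
  "qadj Q P R \<longleftrightarrow> P \<in> quadric_points Q \<and> R \<in> quadric_points Q \<and> P \<noteq> R \<and>
     on_quadric Q (vec.span (P \<union> R))"

definition X_set :: "('a::field ^'n \<Rightarrow> 'a) \<Rightarrow> ('a ^'n) set \<Rightarrow> ('a ^'n) set set" where
  "X_set Q A = {P \<in> quadric_points Q. \<not> P \<subseteq> A \<and> on_quadric Q (vec.span (A \<union> P))}"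

definition Y_set :: "('a::field ^'n \<Rightarrow> 'a) \<Rightarrow> ('a ^'n) set \<Rightarrow> ('a ^'n) set set" where
  "Y_set Q A = quadric_points Q - X_set Q A"

end

(*
  Write B for the polar form of Q and let Y = <y> be a point of type (iii), so that B(a, y) = 1
  for some a in alpha_s.  Sliding along a, (x, t) |-> x + t a, is a bijection from
  (vectors of type (ii) points orthogonal to y) x GF(q) onto all vectors of type (ii) points;
  counting lines gives |X_s| = q |{X in X_s. X ~ Y}|.  A point of type (i) is adjacent to every
  point of X_s.  So for q = 2 the adjacency counts are |X_s| or |X_s|/2.  Conversely,
  nonsingularity provides a type (iii) point (a hyperbolic partner of a point of alpha_s), and
  s < g provides a type (ii) point inside a maximal singular subspace, so |X_s| > 0 and the
  count at that type (iii) point forces q = 2.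
*)
theory Submission
  imports Defs
begin

lemma span_singleton_in_proj_points:
  "(p::'a::field ^'n) \<noteq> 0 \<Longrightarrow> vec.span {p} \<in> proj_points"
  unfolding proj_points_def proj_subspace_def by simp

lemma proj_pointsE:
  assumes "(P::('a::field ^'n) set) \<in> proj_points"
  obtains p where "p \<noteq> 0" "P = vec.span {p}"
proof -
  have sub: "vec.subspace P" and dim: "vec.dim P = 1"
    using assms unfolding proj_points_def proj_subspace_def by auto
  obtain B where B: "B \<subseteq> P" "vec.independent B" "P \<subseteq> vec.span B" "card B = vec.dim P"
    using vec.basis_exists by blast
  have "card B = 1" using B(4) dim by simp
  then obtain p where p: "B = {p}" by (rule card_1_singletonE)
  have "P = vec.span {p}"
    using B(1,3) p sub vec.span_minimal[of "{p}" P] by auto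
  moreover have "p \<noteq> 0"
    using B(2) p vec.dependent_zero by blast
  ultimately show thesis using that by blast
qed

lemma span_singleton_subset_iff:
  "vec.subspace A \<Longrightarrow> vec.span {p} \<subseteq> A \<longleftrightarrow> p \<in> A"
  using vec.span_minimal[of "{p}" A] vec.span_base[of p "{p}"] by blast

lemma span_singleton_eq_if_mem:
  assumes "z \<in> vec.span {x}" "z \<noteq> 0"
  shows "vec.span {z} = vec.span {x}"
proof -
  obtain k where z: "z = k *s x" and "k \<noteq> 0"
    using assms by (auto simp: vec.span_singleton)
  then have "x = (1 / k) *s z" by simp
  then have "x \<in> vec.span {z}" by (simp add: vec.span_base vec.span_scale)
  then show ?thesis
    using assms(1) span_singleton_subset_iff[OF vec.subspace_span] by blast
qed

lemma card_span_singleton: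
  fixes x :: "'a::{finite,field} ^'n"
  assumes "x \<noteq> 0"
  shows "card (vec.span {x}) = CARD('a)"
  unfolding vec.span_singleton using assms by (simp add: card_image inj_on_def)

lemma two_le_card_field: "2 \<le> CARD('a::{finite,field})"
  using card_mono[of UNIV "{0::'a, 1}"] by simp

lemma card_lines_of_cone:
  fixes N :: "('a::{finite,field} ^'n) set"
  assumes zero: "0 \<notin> N" and scale: "\<And>x k. x \<in> N \<Longrightarrow> k \<noteq> 0 \<Longrightarrow> k *s x \<in> N"
  shows "(CARD('a) - 1) * card ((\<lambda>x. vec.span {x}) ` N) = card N"
proof -
  let ?L = "(\<lambda>x. vec.span {x}) ` N"
  let ?C = "(\<lambda>L. L - {0}) ` ?L"
  have "\<Union>?C = N"
  proof
    show "\<Union>?C \<subseteq> N"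
      by (auto simp: vec.span_singleton) (meson scale)
    show "N \<subseteq> \<Union>?C"
    proof
      fix x assume "x \<in> N"
      then have "x \<in> vec.span {x} - {0}" using zero by (auto intro: vec.span_base)
      then show "x \<in> \<Union>?C" using \<open>x \<in> N\<close> by blast
    qed
  qed
  moreover have "inj_on (\<lambda>L. L - {0}) ?L"
  proof (rule inj_onI)
    fix L L' assume L: "L \<in> ?L" "L' \<in> ?L" and eq: "L - {0} = L' - {0}"
    have "0 \<in> L" "0 \<in> L'" using L vec.span_zero by auto
    then show "L = L'" using eq by blast
  qed
  then have "card ?C = card ?L" by (rule card_image)
  moreover have "(CARD('a) - 1) * card ?C = card (\<Union>?C)"
  proof (rule card_partition)
    fix c assume "c \<in> ?C"
    then obtain x where "x \<in> N" "c = vec.span {x} - {0}" by blast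
    moreover have "x \<noteq> 0" using \<open>x \<in> N\<close> zero by blast
    ultimately show "card c = CARD('a) - 1"
      by (simp add: card_span_singleton vec.span_zero)
  next
    fix c1 c2 assume "c1 \<in> ?C" "c2 \<in> ?C" "c1 \<noteq> c2"
    then show "c1 \<inter> c2 = {}"
      using span_singleton_eq_if_mem by blast
  qed simp_all
  ultimately show ?thesis by simp
qed

lemma mem_span_Un_span_singleton:
  assumes "vec.subspace A"
  shows "x \<in> vec.span (A \<union> vec.span {p}) \<longleftrightarrow> (\<exists>a\<in>A. \<exists>k. x = a + k *s p)"
proof -
  have span_A: "vec.span A = A" using assms by simp
  show ?thesis
    unfolding vec.span_Un vec.span_span span_A by (auto simp: vec.span_singleton image_iff)
qed

lemma dim_le_Suc_dim_kernel:
  fixes f :: "'a::field ^'n \<Rightarrow> 'a"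
  assumes add: "\<And>x y. f (x + y) = f x + f y" and scale: "\<And>k x. f (k *s x) = k * f x"
    and S: "vec.subspace S"
  shows "vec.subspace {x\<in>S. f x = 0}" and "vec.dim S \<le> vec.dim {x\<in>S. f x = 0} + 1"
proof -
  let ?K = "{x\<in>S. f x = 0}"
  have "f 0 = 0" using scale[of 0 0] by simp
  then show "vec.subspace ?K"
    using S add scale unfolding vec.subspace_def by auto
  show "vec.dim S \<le> vec.dim ?K + 1"
  proof (cases "\<forall>x\<in>S. f x = 0")
    case True
    then show ?thesis by (simp add: Collect_conj_eq Int_absorb2 subsetI)
  next
    case False
    then obtain s0 where s0: "s0 \<in> S" "f s0 \<noteq> 0" by blast
    have "S \<subseteq> vec.span (insert s0 ?K)"
    proof
      fix x assume x: "x \<in> S"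
      define c where "c = f x / f s0"
      have "x - c *s s0 \<in> ?K"
        using s0 add[of x "(- c) *s s0"] scale[of "- c" s0] vec.subspace_diff[OF S x vec.subspace_scale[OF S s0(1)]]
        by (simp add: c_def)
      then have "(x - c *s s0) + c *s s0 \<in> vec.span (insert s0 ?K)"
        by (intro vec.span_add) (simp_all add: vec.span_base vec.span_scale)
      then show "x \<in> vec.span (insert s0 ?K)" by simp
    qed
    then have "vec.dim S \<le> vec.dim (insert s0 ?K)" by (rule vec.dim_mono)
    also have "\<dots> \<le> vec.dim ?K + 1" by (simp add: vec.dim_insert)
    finally show ?thesis .
  qed
qed

lemma polar_form_coeff_expansion:
  assumes "\<And>x. Q x = (\<Sum>i\<in>UNIV. \<Sum>j\<in>UNIV. c i j * x$i * x$j)"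
  shows "polar_form Q x y = (\<Sum>i\<in>UNIV. \<Sum>j\<in>UNIV. c i j * (x$i * y$j + y$i * x$j))"
proof -
  have "polar_form Q x y = (\<Sum>i\<in>UNIV. \<Sum>j\<in>UNIV.
      c i j * (x + y)$i * (x + y)$j - c i j * x$i * x$j - c i j * y$i * y$j)"
    unfolding polar_form_def assms by (simp add: sum_subtractf)
  also have "\<dots> = (\<Sum>i\<in>UNIV. \<Sum>j\<in>UNIV. c i j * (x$i * y$j + y$i * x$j))"
    by (simp add: algebra_simps)
  finally show ?thesis .
qed

locale quadratic_form =
  fixes Q :: "'a::field ^'n \<Rightarrow> 'a"
  assumes quadratic: "is_quadratic_form Q"
begin

lemma polar_form_add_left [simp]: "polar_form Q (x + x') y = polar_form Q x y + polar_form Q x' y"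
proof -
  obtain c where c: "\<And>x. Q x = (\<Sum>i\<in>UNIV. \<Sum>j\<in>UNIV. c i j * x$i * x$j)"
    using quadratic unfolding is_quadratic_form_def by blast
  show ?thesis
    unfolding polar_form_coeff_expansion[OF c] by (simp add: sum.distrib[symmetric] algebra_simps)
qed

lemma polar_form_scale_left [simp]: "polar_form Q (k *s x) y = k * polar_form Q x y"
proof -
  obtain c where c: "\<And>x. Q x = (\<Sum>i\<in>UNIV. \<Sum>j\<in>UNIV. c i j * x$i * x$j)"
    using quadratic unfolding is_quadratic_form_def by blast
  show ?thesis
    unfolding polar_form_coeff_expansion[OF c] by (simp add: sum_distrib_left algebra_simps)
qed

lemma polar_form_commute: "polar_form Q x y = polar_form Q y x"
proof -
  obtain c where c: "\<And>x. Q x = (\<Sum>i\<in>UNIV. \<Sum>j\<in>UNIV. c i j * x$i * x$j)"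
    using quadratic unfolding is_quadratic_form_def by blast
  show ?thesis
    unfolding polar_form_coeff_expansion[OF c] by (simp add: algebra_simps)
qed

lemma polar_form_add_right [simp]: "polar_form Q y (x + x') = polar_form Q y x + polar_form Q y x'"
  using polar_form_add_left polar_form_commute by metis

lemma polar_form_scale_right [simp]: "polar_form Q y (k *s x) = k * polar_form Q y x"
  using polar_form_scale_left polar_form_commute by metis

lemma polar_form_diff_right: "polar_form Q y (x - x') = polar_form Q y x - polar_form Q y x'"
  using polar_form_add_right[of y "x - x'" x'] by simp

lemma polar_form_zero_right [simp]: "polar_form Q y 0 = 0"
  using polar_form_scale_right[of y 0 0] by simp

lemma quadratic_scale: "Q (k *s x) = k\<^sup>2 * Q x"
proof -
  obtain c where c: "\<And>x. Q x = (\<Sum>i\<in>UNIV. \<Sum>j\<in>UNIV. c i j * x$i * x$j)"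
    using quadratic unfolding is_quadratic_form_def by blast
  have "Q (k *s x) = (\<Sum>i\<in>UNIV. \<Sum>j\<in>UNIV. c i j * (k *s x)$i * (k *s x)$j)"
    by (rule c)
  also have "\<dots> = k\<^sup>2 * (\<Sum>i\<in>UNIV. \<Sum>j\<in>UNIV. c i j * x$i * x$j)"
    by (simp add: sum_distrib_left algebra_simps power2_eq_square)
  finally show ?thesis by (simp only: c)
qed

lemma quadratic_zero [simp]: "Q 0 = 0"
  using quadratic_scale[of 0 0] by simp

lemma quadratic_add: "Q (x + y) = Q x + Q y + polar_form Q x y"
  unfolding polar_form_def by simp

lemma polar_form_self: "polar_form Q x x = 2 * Q x"
proof -
  have "x + x = 2 *s x" by (simp add: vec_eq_iff)
  then show ?thesis
    unfolding polar_form_def using quadratic_scale[of 2 x] by (simp add: power2_eq_square)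
qed

lemma subspace_polar_form_kernel: "vec.subspace {x. polar_form Q x w = 0}"
  using polar_form_scale_left[of 0 0 w] unfolding vec.subspace_def by simp

lemma totally_singular_polar_form_eq_0:
  assumes "vec.subspace W" "on_quadric Q W" "u \<in> W" "v \<in> W"
  shows "polar_form Q u v = 0"
  using assms vec.subspace_add[OF assms(1) assms(3,4)] unfolding on_quadric_def polar_form_def by simp

lemma on_quadric_span_singleton_iff: "on_quadric Q (vec.span {p}) \<longleftrightarrow> Q p = 0"
  unfolding on_quadric_def vec.span_singleton by (auto simp: quadratic_scale)

lemma span_singleton_in_quadric_points_iff:
  "vec.span {p} \<in> quadric_points Q \<longleftrightarrow> p \<noteq> 0 \<and> Q p = 0"
  using span_singleton_in_proj_points[of p]
  by (auto simp: quadric_points_def on_quadric_span_singleton_iff proj_points_def proj_subspace_def)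

lemma on_quadric_join_iff:
  assumes "vec.subspace A" "on_quadric Q A" "Q p = 0"
  shows "on_quadric Q (vec.span (A \<union> vec.span {p})) \<longleftrightarrow> (\<forall>a\<in>A. polar_form Q a p = 0)"
proof -
  have Q_join: "Q (a + k *s p) = k * polar_form Q a p" if "a \<in> A" for a k
    using that assms by (simp add: quadratic_add quadratic_scale on_quadric_def)
  show ?thesis
  proof
    assume on: "on_quadric Q (vec.span (A \<union> vec.span {p}))"
    show "\<forall>a\<in>A. polar_form Q a p = 0"
    proof
      fix a assume "a \<in> A"
      then have "Q (a + 1 *s p) = 0"
        using on mem_span_Un_span_singleton[OF assms(1)] unfolding on_quadric_def by blast
      then show "polar_form Q a p = 0"
        using Q_join[OF \<open>a \<in> A\<close>, of 1] by simp
    qed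
  next
    assume perp: "\<forall>a\<in>A. polar_form Q a p = 0"
    show "on_quadric Q (vec.span (A \<union> vec.span {p}))"
      unfolding on_quadric_def
    proof
      fix x assume "x \<in> vec.span (A \<union> vec.span {p})"
      then obtain a k where "a \<in> A" "x = a + k *s p"
        using mem_span_Un_span_singleton[OF assms(1)] by blast
      then show "Q x = 0" using Q_join perp by simp
    qed
  qed
qed

lemma qadj_span_singleton_iff:
  "qadj Q (vec.span {y}) (vec.span {x}) \<longleftrightarrow>
     y \<noteq> 0 \<and> Q y = 0 \<and> x \<noteq> 0 \<and> Q x = 0 \<and> vec.span {y} \<noteq> vec.span {x} \<and> polar_form Q y x = 0"
proof -
  have "on_quadric Q (vec.span (vec.span {y} \<union> vec.span {x})) \<longleftrightarrow> polar_form Q y x = 0"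
    if "Q y = 0" "Q x = 0"
  proof -
    have "on_quadric Q (vec.span (vec.span {y} \<union> vec.span {x})) \<longleftrightarrow>
        (\<forall>a\<in>vec.span {y}. polar_form Q a x = 0)"
      using on_quadric_join_iff[OF vec.subspace_span _ that(2)] on_quadric_span_singleton_iff that(1)
      by blast
    also have "\<dots> \<longleftrightarrow> polar_form Q y x = 0"
      by (auto simp: vec.span_singleton)
    finally show ?thesis .
  qed
  then show ?thesis
    unfolding qadj_def span_singleton_in_quadric_points_iff by auto
qed

lemma proj_index_attained:
  "\<exists>W. vec.subspace W \<and> int (vec.dim W) = proj_index Q + 1 \<and> on_quadric Q W"
proof -
  define P where "P = (\<lambda>k::int. \<exists>W :: ('a ^'n) set.
    vec.subspace W \<and> int (vec.dim W) = k + 1 \<and> on_quadric Q W)"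
  have bounded: "Collect P \<subseteq> {-1..int CARD('n)}"
  proof
    fix k assume "k \<in> Collect P"
    then obtain W :: "('a ^'n) set" where "int (vec.dim W) = k + 1" unfolding P_def by blast
    moreover have "vec.dim W \<le> CARD('n)" by (rule dim_subset_UNIV_cart_gen)
    ultimately show "k \<in> {-1..int CARD('n)}" by auto
  qed
  have "P (-1)"
    unfolding P_def by (rule exI[of _ "{0}"]) (simp add: on_quadric_def)
  define m where "m = Max (Collect P)"
  have fin: "finite (Collect P)" using finite_subset[OF bounded] by simp
  have "P m" unfolding m_def using Max_in[OF fin] \<open>P (-1)\<close> by blast
  moreover have "Greatest P = m"
    by (rule Greatest_equality) (use \<open>P m\<close> fin in \<open>auto simp: m_def\<close>)
  ultimately show ?thesis unfolding P_def proj_index_def by simp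
qed

lemma exists_singular_partner:
  assumes "Q a = 0" "polar_form Q a z \<noteq> 0"
  shows "\<exists>y. Q y = 0 \<and> polar_form Q a y = 1"
proof -
  define b where "b = polar_form Q a z"
  define c where "c = - Q z / b"
  define y where "y = z + c *s a"
  have "Q y = Q z + c * b"
    using assms polar_form_commute[of z a] by (simp add: y_def b_def quadratic_add quadratic_scale)
  then have "Q y = 0"
    using assms(2) by (simp add: c_def b_def)
  moreover have "polar_form Q a y = b"
    using assms by (simp add: y_def b_def polar_form_self)
  ultimately have "Q ((1 / b) *s y) = 0" and "polar_form Q a ((1 / b) *s y) = 1"
    using assms(2) by (simp_all add: quadratic_scale b_def)
  then show ?thesis by blast
qed

lemma dim_le_dim_perp_add_card:
  assumes "finite E" "vec.subspace S"
  shows "vec.subspace {x\<in>S. \<forall>e\<in>E. polar_form Q e x = 0}"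
    and "vec.dim S \<le> vec.dim {x\<in>S. \<forall>e\<in>E. polar_form Q e x = 0} + card E"
proof -
  have "vec.subspace {x\<in>S. \<forall>e\<in>E. polar_form Q e x = 0} \<and>
      vec.dim S \<le> vec.dim {x\<in>S. \<forall>e\<in>E. polar_form Q e x = 0} + card E"
    using assms(1)
  proof (induction E rule: finite_induct)
    case (insert e F)
    let ?SF = "{x\<in>S. \<forall>e\<in>F. polar_form Q e x = 0}"
    have "{x\<in>S. \<forall>e'\<in>insert e F. polar_form Q e' x = 0} = {x\<in>?SF. polar_form Q e x = 0}"
      by auto
    moreover note dim_le_Suc_dim_kernel[of "polar_form Q e" ?SF,
        OF polar_form_add_right polar_form_scale_right conjunct1[OF insert.IH]]
    ultimately show ?case using insert by simp
  qed (use assms(2) in simp)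
  then show "vec.subspace {x\<in>S. \<forall>e\<in>E. polar_form Q e x = 0}"
    and "vec.dim S \<le> vec.dim {x\<in>S. \<forall>e\<in>E. polar_form Q e x = 0} + card E"
    by blast+
qed

text \<open>Extend a basis of \<open>A \<inter> W\<close> to one of \<open>A\<close>. The vectors of \<open>W\<close> orthogonal to the
  new basis vectors form a subspace too large to lie in \<open>A \<inter> W\<close>, and they are orthogonal to
  \<open>A \<inter> W\<close> anyway because \<open>W\<close> is totally singular.\<close>
lemma exists_orthogonal_outside:
  assumes W: "vec.subspace W" "on_quadric Q W"
    and dim: "vec.dim A < vec.dim W"
  shows "\<exists>w\<in>W. w \<notin> A \<and> (\<forall>a\<in>A. polar_form Q a w = 0)"
proof -
  let ?D = "A \<inter> W"
  obtain BD where BD: "BD \<subseteq> ?D" "vec.independent BD" "?D \<subseteq> vec.span BD" "card BD = vec.dim ?D"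
    using vec.basis_exists by blast
  obtain BA where BA: "BD \<subseteq> BA" "BA \<subseteq> A" "vec.independent BA" "A \<subseteq> vec.span BA"
    using vec.maximal_independent_subset_extend[of BD A] BD by blast
  have "finite BA" using BA(3) vec.independent_bound_general by blast
  define E where "E = BA - BD"
  have "finite E" using \<open>finite BA\<close> by (simp add: E_def)
  have "card E = vec.dim A - vec.dim ?D"
    unfolding E_def using card_Diff_subset[OF finite_subset[OF BA(1)] BA(1)] \<open>finite BA\<close> BD(4)
      vec.basis_card_eq_dim[OF BA(2) BA(4) BA(3)] by simp
  have "vec.dim ?D \<le> vec.dim A" by (rule vec.dim_subset) blast
  let ?K = "{x\<in>W. \<forall>e\<in>E. polar_form Q e x = 0}"
  have "\<not> ?K \<subseteq> A"
  proof
    assume "?K \<subseteq> A"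
    then have "vec.dim ?K \<le> vec.dim ?D" by (intro vec.dim_subset) blast
    then show False
      using dim_le_dim_perp_add_card(2)[OF \<open>finite E\<close> W(1)] \<open>card E = _\<close> \<open>vec.dim ?D \<le> _\<close> dim
      by linarith
  qed
  then obtain w where w: "w \<in> W" "\<forall>e\<in>E. polar_form Q e w = 0" "w \<notin> A" by blast
  have "polar_form Q b w = 0" if "b \<in> BA" for b
  proof (cases "b \<in> BD")
    case True
    then show ?thesis using BD(1) w(1) totally_singular_polar_form_eq_0[OF W] by blast
  next
    case False
    then show ?thesis using that w(2) by (simp add: E_def)
  qed
  then have "A \<subseteq> {a. polar_form Q a w = 0}"
    using BA(4) vec.span_minimal[of BA, OF _ subspace_polar_form_kernel] by blast
  then show ?thesis using w by blast
qed

end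

definition X_vectors :: "('a::field ^'n \<Rightarrow> 'a) \<Rightarrow> ('a ^'n) set \<Rightarrow> ('a ^'n) set" where
  "X_vectors Q A = {x. Q x = 0 \<and> x \<notin> A \<and> (\<forall>a\<in>A. polar_form Q a x = 0)}"

locale totally_singular_subspace = quadratic_form Q for Q :: "'a::field ^'n \<Rightarrow> 'a" +
  fixes A :: "('a ^'n) set"
  assumes subspace: "vec.subspace A" and singular: "on_quadric Q A"
begin

lemma zero_notin_X_vectors: "0 \<notin> X_vectors Q A"
  using subspace vec.subspace_0 unfolding X_vectors_def by blast

lemma X_vectors_scale:
  assumes "x \<in> X_vectors Q A" "k \<noteq> 0"
  shows "k *s x \<in> X_vectors Q A"
proof -
  have "k *s x \<notin> A"
  proof
    assume "k *s x \<in> A"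
    then have "(1 / k) *s (k *s x) \<in> A" by (rule vec.subspace_scale[OF subspace])
    then show False using assms unfolding X_vectors_def by simp
  qed
  then show ?thesis
    using assms(1) unfolding X_vectors_def by (simp add: quadratic_scale)
qed

lemma span_singleton_in_X_set_iff:
  "vec.span {p} \<in> X_set Q A \<longleftrightarrow> p \<in> X_vectors Q A"
proof -
  have "p \<notin> A \<Longrightarrow> p \<noteq> 0" using vec.subspace_0[OF subspace] by blast
  then show ?thesis
    unfolding X_set_def X_vectors_def mem_Collect_eq span_singleton_in_quadric_points_iff
      span_singleton_subset_iff[OF subspace]
    using on_quadric_join_iff[OF subspace singular, of p] by blast
qed

lemma X_set_eq_image: "X_set Q A = (\<lambda>x. vec.span {x}) ` X_vectors Q A"
proof
  show "X_set Q A \<subseteq> (\<lambda>x. vec.span {x}) ` X_vectors Q A"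
  proof
    fix X assume X: "X \<in> X_set Q A"
    then have "X \<in> proj_points" unfolding X_set_def quadric_points_def by blast
    then obtain x where "X = vec.span {x}" by (rule proj_pointsE)
    then show "X \<in> (\<lambda>x. vec.span {x}) ` X_vectors Q A"
      using X span_singleton_in_X_set_iff by blast
  qed
  show "(\<lambda>x. vec.span {x}) ` X_vectors Q A \<subseteq> X_set Q A"
    using span_singleton_in_X_set_iff by blast
qed

lemma adjacent_X_set_eq_image:
  assumes "Q y = 0" "y \<notin> X_vectors Q A" "y \<noteq> 0"
  shows "{X\<in>X_set Q A. qadj Q (vec.span {y}) X} =
         (\<lambda>x. vec.span {x}) ` {x\<in>X_vectors Q A. polar_form Q y x = 0}"
proof -
  have "qadj Q (vec.span {y}) (vec.span {x}) \<longleftrightarrow> polar_form Q y x = 0" if x: "x \<in> X_vectors Q A" for x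
  proof -
    have "vec.span {y} \<noteq> vec.span {x}"
    proof
      assume "vec.span {y} = vec.span {x}"
      then obtain k where "y = k *s x"
        using vec.span_base[of y "{y}"] by (auto simp: vec.span_singleton)
      then show False
        using X_vectors_scale[OF x, of k] assms(2,3) by (cases "k = 0") auto
    qed
    moreover have "x \<noteq> 0" "Q x = 0"
      using x zero_notin_X_vectors unfolding X_vectors_def by auto
    ultimately show ?thesis
      using assms(1,3) by (simp add: qadj_span_singleton_iff)
  qed
  then show ?thesis unfolding X_set_eq_image by auto
qed

lemma X_vectors_add_scale:
  assumes "x \<in> X_vectors Q A" "a \<in> A"
  shows "x + t *s a \<in> X_vectors Q A"
proof -
  have x: "Q x = 0" "x \<notin> A" "\<forall>a'\<in>A. polar_form Q a' x = 0"
    using assms(1) unfolding X_vectors_def by auto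
  have "x + t *s a \<notin> A"
  proof
    assume "x + t *s a \<in> A"
    then have "(x + t *s a) - t *s a \<in> A"
      using vec.subspace_diff[OF subspace _ vec.subspace_scale[OF subspace assms(2)]] by blast
    then show False using x(2) by simp
  qed
  moreover have "Q (x + t *s a) = 0"
  proof -
    have "Q a = 0" using assms(2) singular unfolding on_quadric_def by blast
    moreover have "polar_form Q x a = 0"
      using x(3) assms(2) polar_form_commute[of x a] by simp
    ultimately show ?thesis
      using x(1) by (simp add: quadratic_add quadratic_scale)
  qed
  moreover have "\<forall>a'\<in>A. polar_form Q a' (x + t *s a) = 0"
    using x(3) totally_singular_polar_form_eq_0[OF subspace singular _ assms(2)] by simp
  ultimately show ?thesis unfolding X_vectors_def by blast
qed

lemma X_vectors_split:
  assumes a: "a \<in> A" "polar_form Q a y = 1"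
  shows "bij_betw (\<lambda>(x, t). x + t *s a)
           ({x\<in>X_vectors Q A. polar_form Q y x = 0} \<times> UNIV) (X_vectors Q A)"
proof -
  have ya: "polar_form Q y a = 1" using a(2) polar_form_commute[of a y] by simp
  note slide = X_vectors_add_scale[OF _ a(1)]
  let ?Ny = "{x\<in>X_vectors Q A. polar_form Q y x = 0}"
  let ?f = "\<lambda>(x, t). x + t *s a"
  let ?g = "\<lambda>v. (v - polar_form Q y v *s a, polar_form Q y v)"
  show ?thesis
  proof (rule bij_betw_byWitness[where f' = ?g])
    show "?f ` (?Ny \<times> UNIV) \<subseteq> X_vectors Q A"
      using slide by auto
    show "?g ` X_vectors Q A \<subseteq> ?Ny \<times> UNIV"
    proof (rule image_subsetI)
      fix v assume "v \<in> X_vectors Q A"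
      then have "v - polar_form Q y v *s a \<in> X_vectors Q A"
        using slide[of v "- polar_form Q y v"] by simp
      then show "?g v \<in> ?Ny \<times> UNIV"
        using ya by (simp add: polar_form_diff_right)
    qed
    show "\<forall>p\<in>?Ny \<times> UNIV. ?g (?f p) = p"
      using ya by auto
    show "\<forall>v\<in>X_vectors Q A. ?f (?g v) = v"
      by simp
  qed
qed

lemma adjacent_X_set_eq_X_set:
  assumes "y \<in> A" "y \<noteq> 0"
  shows "{X\<in>X_set Q A. qadj Q (vec.span {y}) X} = X_set Q A"
proof -
  have "qadj Q (vec.span {y}) (vec.span {x})" if x: "x \<in> X_vectors Q A" for x
  proof -
    have "x \<notin> A" "x \<noteq> 0" "Q x = 0" "polar_form Q y x = 0"
      using x assms(1) zero_notin_X_vectors unfolding X_vectors_def by auto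
    moreover have "vec.span {y} \<noteq> vec.span {x}"
      using \<open>x \<notin> A\<close> assms(1) span_singleton_subset_iff[OF subspace, of y] vec.span_base[of x "{x}"]
      by blast
    moreover have "Q y = 0"
      using assms(1) singular unfolding on_quadric_def by blast
    ultimately show ?thesis
      using assms(2) by (simp add: qadj_span_singleton_iff)
  qed
  then show ?thesis unfolding X_set_eq_image by blast
qed

lemma X_set_nonempty:
  assumes "int (vec.dim A) \<le> proj_index Q"
  shows "X_set Q A \<noteq> {}"
proof -
  obtain W where W: "vec.subspace W" "on_quadric Q W" "int (vec.dim W) = proj_index Q + 1"
    using proj_index_attained by blast
  then have "vec.dim A < vec.dim W" using assms by linarith
  then obtain w where "w \<in> W" "w \<notin> A" "\<forall>a\<in>A. polar_form Q a w = 0"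
    using exists_orthogonal_outside[OF W(1,2)] by blast
  then have "w \<in> X_vectors Q A"
    using W(2) unfolding X_vectors_def on_quadric_def by blast
  then show ?thesis unfolding X_set_eq_image by blast
qed

lemma nonsingular_partnerE:
  assumes "nonsingular_qf Q" "vec.dim A \<noteq> 0"
  obtains a y where "a \<in> A" "Q y = 0" "polar_form Q a y = 1"
proof -
  obtain a where a: "a \<in> A" "a \<noteq> 0"
    using assms(2) vec.dim_eq_0[of A] by auto
  moreover have "Q a = 0" using a(1) singular unfolding on_quadric_def by blast
  ultimately obtain z where "polar_form Q a z \<noteq> 0"
    using assms(1) unfolding nonsingular_qf_def by blast
  then show thesis
    using exists_singular_partner \<open>Q a = 0\<close> that a(1) by blast
qed

lemma span_singleton_in_Y_set:
  assumes "a \<in> A" "Q y = 0" "polar_form Q a y = 1"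
  shows "vec.span {y} \<in> Y_set Q A"
proof -
  have "y \<noteq> 0" using assms(3) by auto
  then show ?thesis
    using assms span_singleton_in_X_set_iff span_singleton_in_quadric_points_iff
    unfolding Y_set_def X_vectors_def by auto
qed

lemma Y_set_partnerE:
  assumes "vec.span {y} \<in> Y_set Q A" "y \<notin> A"
  obtains a where "a \<in> A" "polar_form Q a y = 1"
proof -
  have "Q y = 0" "y \<notin> X_vectors Q A"
    using assms span_singleton_in_X_set_iff span_singleton_in_quadric_points_iff
    unfolding Y_set_def by auto
  then obtain a where "a \<in> A" "polar_form Q a y \<noteq> 0"
    using assms(2) unfolding X_vectors_def by blast
  then show thesis
    using that[of "(1 / polar_form Q a y) *s a"] vec.subspace_scale[OF subspace] by simp
qed

end

lemma card_X_set_eq_mult_card_adjacent: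
  fixes Q :: "'a::{finite,field} ^'n \<Rightarrow> 'a"
  assumes "totally_singular_subspace Q A" "a \<in> A" "polar_form Q a y = 1" "Q y = 0"
  shows "card (X_set Q A) = CARD('a) * card {X\<in>X_set Q A. qadj Q (vec.span {y}) X}"
proof -
  interpret totally_singular_subspace Q A by fact
  let ?N = "X_vectors Q A"
  let ?Ny = "{x\<in>?N. polar_form Q y x = 0}"
  have "y \<noteq> 0" "y \<notin> ?N"
    using assms(2,3) unfolding X_vectors_def by auto
  have "(CARD('a) - 1) * card (X_set Q A) = card ?N"
    unfolding X_set_eq_image by (rule card_lines_of_cone) (use zero_notin_X_vectors X_vectors_scale in auto)
  also have "\<dots> = card (?Ny \<times> (UNIV :: 'a set))"
    using bij_betw_same_card[OF X_vectors_split[OF assms(2,3)]] by simp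
  also have "\<dots> = CARD('a) * ((CARD('a) - 1) * card {X\<in>X_set Q A. qadj Q (vec.span {y}) X})"
    unfolding adjacent_X_set_eq_image[OF assms(4) \<open>y \<notin> ?N\<close> \<open>y \<noteq> 0\<close>]
    by (subst card_lines_of_cone) (use zero_notin_X_vectors X_vectors_scale in \<open>auto simp: card_cartesian_product\<close>)
  finally show ?thesis
    using two_le_card_field[where 'a='a] by simp
qed

lemma card_adjacent_X_set_cases:
  fixes Q :: "'a::{finite,field} ^'n \<Rightarrow> 'a"
  assumes "totally_singular_subspace Q A" "Y \<in> Y_set Q A"
  shows "card {X\<in>X_set Q A. qadj Q Y X} = card (X_set Q A) \<or>
         card (X_set Q A) = CARD('a) * card {X\<in>X_set Q A. qadj Q Y X}"
proof -
  interpret totally_singular_subspace Q A by fact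
  obtain y where y: "y \<noteq> 0" "Y = vec.span {y}"
    using assms(2) unfolding Y_set_def quadric_points_def by (auto elim: proj_pointsE)
  show ?thesis
  proof (cases "y \<in> A")
    case True
    then show ?thesis using adjacent_X_set_eq_X_set y by simp
  next
    case False
    then obtain a where "a \<in> A" "polar_form Q a y = 1"
      using Y_set_partnerE assms(2) y(2) by blast
    moreover have "Q y = 0"
      using assms(2) y span_singleton_in_quadric_points_iff unfolding Y_set_def by auto
    ultimately show ?thesis
      using card_X_set_eq_mult_card_adjacent[OF assms(1)] y(2) by blast
  qed
qed

theorem lemma4p3:
  fixes Q :: "'a::{finite,field} ^ 'n \<Rightarrow> 'a"
    and A :: "('a ^ 'n) set"
    and s :: nat
  assumes "nonsingular_qf Q"
    and "int s < proj_index Q"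
    and "proj_subspace s A"
    and "on_quadric Q A"
  shows "(\<forall>Y\<in>Y_set Q A.
            2 * card {X\<in>X_set Q A. qadj Q Y X} \<in> {0, card (X_set Q A), 2 * card (X_set Q A)})
         \<longleftrightarrow> CARD('a) = 2"
proof -
  have dim_A: "vec.dim A = s + 1" and ts: "totally_singular_subspace Q A"
    using assms(1,3,4) unfolding proj_subspace_def totally_singular_subspace_def
      totally_singular_subspace_axioms_def quadratic_form_def nonsingular_qf_def by auto
  interpret totally_singular_subspace Q A by (fact ts)
  obtain a y where a: "a \<in> A" and y: "Q y = 0" "polar_form Q a y = 1"
    using nonsingular_partnerE[OF assms(1)] dim_A by auto
  define m where "m = card {X\<in>X_set Q A. qadj Q (vec.span {y}) X}"
  have count: "card (X_set Q A) = CARD('a) * m"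
    unfolding m_def using card_X_set_eq_mult_card_adjacent[OF ts a(1) y(2) y(1)] .
  have "X_set Q A \<noteq> {}"
    using X_set_nonempty dim_A assms(2) by simp
  then have "card (X_set Q A) > 0"
    by (simp add: card_gt_0_iff)
  then have "m > 0"
    using count by simp
  have "CARD('a) = 2" if "2 * m \<in> {0, card (X_set Q A), 2 * card (X_set Q A)}"
    using that unfolding count using \<open>m > 0\<close> two_le_card_field[where 'a='a] by auto
  moreover have "2 * card {X\<in>X_set Q A. qadj Q Y X} \<in> {0, card (X_set Q A), 2 * card (X_set Q A)}"
    if "CARD('a) = 2" "Y \<in> Y_set Q A" for Y
    using card_adjacent_X_set_cases[OF ts that(2)] that(1) by (elim disjE) simp_all
  ultimately show ?thesis
    using span_singleton_in_Y_set[OF a y] unfolding m_def by blast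
qed

end
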